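(* For a set $\mathcal{R}$ of languages over $\Sigma$ and a regular language $R\subseteq\Sigma^*$ let $\mathcal{R}\,\dot\cup\,R=\{L\cup R\mid L\in\mathcal{R}\}$. (1) There exist a rational set of regular languages $\mathcal{R}$ and a regular language $R$ such that $\mathcal{R}\,\dot\cup\,R$ is not a rational set of regular languages. (2) If $\mathcal{R}$ is a finite rational set of regular languages and $R$ is regular, then $\mathcal{R}\,\dot\cup\,R$ is a rational set of regular languages. (3) In the latter case a different language substitution is in general required: there exist an alphabet $\Delta$, a regular language substitution $\varphi:\Delta\to2^{\Sigma^*}$, a regular $K\subseteq\Delta^+$ with $\mathcal{R}=(K,\varphi)$ finite, and a regular $R\subseteq\Sigma^*$ such that there is no regular $K'\subseteq\Delta^+$ with $\mathcal{R}\,\dot\cup\,R=(K',\varphi)$.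
   Context: Alphabets are nonempty finite sets. A regular language substitution $\varphi:\Delta\to2^{\Sigma^*}$ maps each symbol to a regular language over $\Sigma$, extended by $\varphi(\delta w)=\varphi(\delta)\varphi(w)$. A set $\mathcal{R}$ of regular languages over $\Sigma$ is a rational set of regular languages, written $\mathcal{R}=(K,\varphi)$, if there are an alphabet $\Delta$, a regular $K\subseteq\Delta^+$ and a regular language substitution $\varphi$ with $\mathcal{R}=\{\varphi(w)\mid w\in K\}$. *)

theory Defs
  imports Main
begin

definition alphabet :: "'a set \<Rightarrow> bool" where
  "alphabet \<Sigma> \<longleftrightarrow> finite \<Sigma> \<and> \<Sigma> \<noteq> {}"

definition lconc :: "'a list set \<Rightarrow> 'a list set \<Rightarrow> 'a list set" where
  "lconc A B = {u @ v | u v. u \<in> A \<and> v \<in> B}"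

definition lstar :: "'a list set \<Rightarrow> 'a list set" where
  "lstar A = {concat ws | ws. set ws \<subseteq> A}"

inductive regular :: "'a set \<Rightarrow> 'a list set \<Rightarrow> bool" for \<Sigma> :: "'a set" where
  reg_empty: "regular \<Sigma> {}"
| reg_eps: "regular \<Sigma> {[]}"
| reg_sym: "a \<in> \<Sigma> \<Longrightarrow> regular \<Sigma> {[a]}"
| reg_union: "regular \<Sigma> A \<Longrightarrow> regular \<Sigma> B \<Longrightarrow> regular \<Sigma> (A \<union> B)"
| reg_conc: "regular \<Sigma> A \<Longrightarrow> regular \<Sigma> B \<Longrightarrow> regular \<Sigma> (lconc A B)"
| reg_star: "regular \<Sigma> A \<Longrightarrow> regular \<Sigma> (lstar A)"

definition reg_subst :: "'d set \<Rightarrow> 'a set \<Rightarrow> ('d \<Rightarrow> 'a list set) \<Rightarrow> bool" where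
  "reg_subst \<Delta> \<Sigma> \<phi> \<longleftrightarrow> (\<forall>\<delta>\<in>\<Delta>. regular \<Sigma> (\<phi> \<delta>))"

fun subst_word :: "('d \<Rightarrow> 'a list set) \<Rightarrow> 'd list \<Rightarrow> 'a list set" where
  "subst_word \<phi> [] = {[]}"
| "subst_word \<phi> (\<delta> # w) = lconc (\<phi> \<delta>) (subst_word \<phi> w)"

definition represents ::
  "'a set \<Rightarrow> 'd set \<Rightarrow> 'd list set \<Rightarrow> ('d \<Rightarrow> 'a list set) \<Rightarrow> 'a list set set \<Rightarrow> bool" where
  "represents \<Sigma> \<Delta> K \<phi> \<R> \<longleftrightarrow>
     alphabet \<Delta> \<and> regular \<Delta> K \<and> K \<subseteq> lists \<Delta> - {[]} \<and> reg_subst \<Delta> \<Sigma> \<phi> \<and>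
     \<R> = subst_word \<phi> ` K"

text \<open>Rational set of regular languages; symbol alphabets Delta are finite sets of naturals
  (any finite alphabet can be renamed into nat).\<close>
definition rational_set :: "'a set \<Rightarrow> 'a list set set \<Rightarrow> bool" where
  "rational_set \<Sigma> \<R> \<longleftrightarrow> (\<exists>(\<Delta>::nat set) K \<phi>. represents \<Sigma> \<Delta> K \<phi> \<R>)"

definition dunion :: "'a list set set \<Rightarrow> 'a list set \<Rightarrow> 'a list set set" where
  "dunion \<R> R = (\<lambda>L. L \<union> R) ` \<R>"

end

theory Submission
  imports Defs
begin

text \<open>
  Every finite set of regular languages is rational: give each language its own symbol. This
  settles (2). For (1) and (3) the key observation is that \<open>{\<epsilon>, x}\<close> with \<open>x \<noteq> \<epsilon>\<close> can only
  arise as a product \<open>\<phi>(\<delta>\<^sub>1) \<cdots> \<phi>(\<delta>\<^sub>n)\<close> if some factor is itself \<open>{\<epsilon>, x}\<close> and the others are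
  \<open>{\<epsilon>}\<close>. Hence a rational set contains only finitely many languages of that shape, whereas
  \<open>{{a\<^sup>n} | n \<ge> 1} \<union>\<^sup>. {\<epsilon>} = {{\<epsilon>, a\<^sup>n} | n \<ge> 1}\<close> contains infinitely many. And with the substitution
  \<open>a \<mapsto> {a}\<close> every \<open>\<phi>(w)\<close> is a singleton, so \<open>{{a}} \<union>\<^sup>. {\<epsilon>} = {{\<epsilon>, a}}\<close> needs a new substitution.
\<close>

lemma lconc_Nil_right [simp]: "lconc A {[]} = A"
  unfolding lconc_def by auto

lemma lstar_letter: "lstar {[a]} = range (\<lambda>n. replicate n a)"
proof (intro set_eqI iffI)
  fix u assume "u \<in> lstar {[a]}"
  then obtain ws where "u = concat ws" and "set ws \<subseteq> {[a]}" unfolding lstar_def by blast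
  then have "u = replicate (length ws) a" by (induction ws arbitrary: u) auto
  then show "u \<in> range (\<lambda>n. replicate n a)" by blast
next
  fix u assume "u \<in> range (\<lambda>n. replicate n a)"
  then obtain n where "u = replicate n a" by blast
  then have "u = concat (replicate n [a])" by (induction n arbitrary: u) auto
  then show "u \<in> lstar {[a]}" unfolding lstar_def by fastforce
qed

lemma subst_word_const_letter: "subst_word (\<lambda>_. {[a]}) w = {replicate (length w) a}"
  by (induction w) (auto simp: lconc_def)

lemma regular_subst_word:
  assumes "reg_subst \<Delta> \<Sigma> \<phi>" and "w \<in> lists \<Delta>"
  shows "regular \<Sigma> (subst_word \<phi> w)"
  using assms(2)
proof (induction w)
  case Nil
  show ?case by (simp add: reg_eps)
next
  case (Cons \<delta> w)
  then show ?case using assms(1) by (auto simp: reg_subst_def intro: reg_conc)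
qed

lemma rational_set_regular:
  assumes "rational_set \<Sigma> \<R>" and "L \<in> \<R>"
  shows "regular \<Sigma> L"
  using assms regular_subst_word unfolding rational_set_def represents_def by blast

lemma regular_letters:
  assumes "finite A" and "A \<subseteq> \<Sigma>"
  shows "regular \<Sigma> ((\<lambda>a. [a]) ` A)"
  using assms
proof (induction A rule: finite_induct)
  case empty
  show ?case by (simp add: reg_empty)
next
  case (insert a A)
  then have "regular \<Sigma> ({[a]} \<union> (\<lambda>a. [a]) ` A)" by (intro reg_union reg_sym) auto
  then show ?case by simp
qed

lemma rational_set_finite:
  assumes "finite \<R>" and "\<forall>L\<in>\<R>. regular \<Sigma> L"
  shows "rational_set \<Sigma> \<R>"
proof -
  define n where "n = card \<R>"
  obtain f where f: "bij_betw f {0..<n} \<R>"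
    using ex_bij_betw_nat_finite[OF assms(1)] n_def by blast
  \<comment> \<open>The extra symbol \<open>n\<close> only keeps \<open>\<Delta>\<close> nonempty when \<open>\<R> = {}\<close>.\<close>
  define \<phi> where "\<phi> = (\<lambda>i. if i < n then f i else {})"
  define K where "K = (\<lambda>i. [i]) ` {0..<n}"
  have "reg_subst {0..n} \<Sigma> \<phi>"
    unfolding reg_subst_def \<phi>_def
    using assms(2) bij_betw_apply[OF f] by (auto intro: reg_empty)
  moreover have "subst_word \<phi> ` K = \<R>"
    unfolding K_def \<phi>_def image_image using bij_betw_imp_surj_on[OF f] by simp
  ultimately have "represents \<Sigma> {0..n} K \<phi> \<R>"
    unfolding represents_def alphabet_def K_def by (auto intro: regular_letters)
  then show ?thesis
    unfolding rational_set_def by blast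
qed

lemma lconc_eq_Nil_pair:
  assumes "lconc A B = {[], x}" and "x \<noteq> []"
  shows "A = {[], x} \<or> (A = {[]} \<and> B = {[], x})"
proof -
  have "[] \<in> lconc A B" using assms(1) by simp
  then have "[] \<in> A" and "[] \<in> B" unfolding lconc_def by auto
  then have "A \<subseteq> lconc A B" and "B \<subseteq> lconc A B" unfolding lconc_def by force+
  then have "A \<subseteq> {[], x}" and "B \<subseteq> {[], x}" using assms(1) by simp_all
  moreover have "x \<in> lconc A B" using assms(1) by simp
  then obtain u v where "x = u @ v" "u \<in> A" "v \<in> B" unfolding lconc_def by blast
  ultimately show ?thesis using \<open>[] \<in> A\<close> \<open>[] \<in> B\<close> assms(2) by auto
qed

lemma subst_word_eq_Nil_pair:
  assumes "subst_word \<phi> w = {[], x}" and "x \<noteq> []"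
  shows "\<exists>\<delta>\<in>set w. \<phi> \<delta> = {[], x}"
  using assms(1)
proof (induction w)
  case Nil
  then show ?case using assms(2) by (simp add: doubleton_eq_iff)
next
  case (Cons \<delta> w)
  then have "lconc (\<phi> \<delta>) (subst_word \<phi> w) = {[], x}" by simp
  then have "\<phi> \<delta> = {[], x} \<or> subst_word \<phi> w = {[], x}"
    using lconc_eq_Nil_pair[OF _ assms(2)] by blast
  then show ?case using Cons.IH by auto
qed

lemma rational_set_finitely_many_pairs:
  assumes "rational_set \<Sigma> \<R>"
  shows "finite {x. x \<noteq> [] \<and> {[], x} \<in> \<R>}"
proof -
  obtain \<Delta> :: "nat set" and K \<phi> where rep: "represents \<Sigma> \<Delta> K \<phi> \<R>"
    using assms unfolding rational_set_def by blast
  define P where "P = {x. x \<noteq> [] \<and> {[], x} \<in> \<R>}"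
  have "{[], x} \<in> \<phi> ` \<Delta>" if "x \<in> P" for x
  proof -
    from that have "x \<noteq> []" and "{[], x} \<in> subst_word \<phi> ` K"
      using rep unfolding P_def represents_def by simp_all
    then obtain w where "w \<in> K" and w: "subst_word \<phi> w = {[], x}" by force
    then have "w \<in> lists \<Delta>" using rep unfolding represents_def by blast
    moreover obtain \<delta> where "\<delta> \<in> set w" and "\<phi> \<delta> = {[], x}"
      using subst_word_eq_Nil_pair[OF w \<open>x \<noteq> []\<close>] by blast
    ultimately have "\<delta> \<in> \<Delta>" by (auto simp: in_lists_conv_set)
    with \<open>\<phi> \<delta> = {[], x}\<close> show ?thesis by (metis image_eqI)
  qed
  then have "(\<lambda>x. {[], x}) ` P \<subseteq> \<phi> ` \<Delta>" by (rule image_subsetI)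
  moreover have "finite \<Delta>" using rep unfolding represents_def alphabet_def by blast
  ultimately have "finite ((\<lambda>x. {[], x}) ` P)" by (meson finite_imageI finite_subset)
  moreover have "inj_on (\<lambda>x. {[], x}) P"
  proof (rule inj_onI)
    fix x y assume "{[], x} = {[], y}" and "x \<in> P"
    then show "x = y" unfolding P_def by (metis empty_iff insert_iff)
  qed
  ultimately show ?thesis unfolding P_def[symmetric] by (rule finite_imageD)
qed

lemma rational_set_dunion_counterexample:
  defines "\<phi> \<equiv> \<lambda>_::nat. {[0::nat]}" and "K \<equiv> lconc {[0::nat]} (lstar {[0]})"
  shows "rational_set {0} (subst_word \<phi> ` K)"
    and "\<not> rational_set {0} (dunion (subst_word \<phi> ` K) {[]})"
proof -
  have K_eq: "K = range (\<lambda>n. replicate (Suc n) 0)"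
    unfolding K_def lstar_letter lconc_def by auto
  have "represents {0} {0} K \<phi> (subst_word \<phi> ` K)"
    unfolding represents_def
  proof (intro conjI)
    show "alphabet {0::nat}" by (simp add: alphabet_def)
    show "regular {0} K" unfolding K_def by (intro reg_conc reg_star reg_sym) simp_all
    show "K \<subseteq> lists {0} - {[]}" unfolding K_eq by auto
    show "reg_subst {0} {0} \<phi>" unfolding reg_subst_def \<phi>_def by (simp add: reg_sym)
  qed (rule refl)
  then show "rational_set {0} (subst_word \<phi> ` K)"
    unfolding rational_set_def by blast
  have pairs: "{x. x \<noteq> [] \<and> {[], x} \<in> dunion (subst_word \<phi> ` K) {[]}}
        = range (\<lambda>n. replicate (Suc n) (0::nat))"
    unfolding dunion_def K_eq image_image \<phi>_def subst_word_const_letter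
    by (auto simp: doubleton_eq_iff)
  have infinite: "infinite (range (\<lambda>n. replicate (Suc n) (0::nat)))"
  proof
    assume "finite (range (\<lambda>n. replicate (Suc n) (0::nat)))"
    then have "finite (UNIV :: nat set)" by (rule finite_imageD) (simp add: inj_def)
    then show False by simp
  qed
  show "\<not> rational_set {0} (dunion (subst_word \<phi> ` K) {[]})"
    using rational_set_finitely_many_pairs[of "{0}" "dunion (subst_word \<phi> ` K) {[]}"]
    unfolding pairs using infinite by blast
qed

lemma dunion_requires_new_subst:
  defines "\<phi> \<equiv> \<lambda>_::nat. {[0::nat]}"
  shows "represents {0} {0} {[0]} \<phi> (subst_word \<phi> ` {[0]})"
    and "\<not> (\<exists>K'. represents {0} {0} K' \<phi> (dunion (subst_word \<phi> ` {[0]}) {[]}))"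
proof -
  show "represents {0} {0} {[0]} \<phi> (subst_word \<phi> ` {[0]})"
    unfolding represents_def \<phi>_def by (auto simp: alphabet_def reg_subst_def intro: reg_sym)
  have "dunion (subst_word \<phi> ` {[0]}) {[]} = {{[], [0]}}"
    unfolding dunion_def \<phi>_def by (auto simp: lconc_def)
  moreover have "{[], [0]} \<notin> subst_word \<phi> ` K'" for K'
    unfolding \<phi>_def subst_word_const_letter by (auto simp: doubleton_eq_iff)
  ultimately show "\<not> (\<exists>K'. represents {0} {0} K' \<phi> (dunion (subst_word \<phi> ` {[0]}) {[]}))"
    unfolding represents_def by (metis insertI1)
qed

theorem proposition6:
  shows "(\<exists>(\<Sigma>::nat set) \<R> R. alphabet \<Sigma> \<and> rational_set \<Sigma> \<R> \<and> regular \<Sigma> R \<and>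
            \<not> rational_set \<Sigma> (dunion \<R> R))
       \<and> (\<forall>(\<Sigma>::'a set) \<R> R. alphabet \<Sigma> \<and> rational_set \<Sigma> \<R> \<and> finite \<R> \<and> regular \<Sigma> R \<longrightarrow>
            rational_set \<Sigma> (dunion \<R> R))
       \<and> (\<exists>(\<Sigma>::nat set) (\<Delta>::nat set) \<phi> K R. alphabet \<Sigma> \<and> represents \<Sigma> \<Delta> K \<phi> (subst_word \<phi> ` K) \<and>
            finite (subst_word \<phi> ` K) \<and> regular \<Sigma> R \<and>
            \<not> (\<exists>K'. represents \<Sigma> \<Delta> K' \<phi> (dunion (subst_word \<phi> ` K) R)))"
proof (intro conjI allI impI)
  have "alphabet {0::nat}" and "regular {0::nat} {[]}"
    by (simp_all add: alphabet_def reg_eps)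
  then show "\<exists>(\<Sigma>::nat set) \<R> R. alphabet \<Sigma> \<and> rational_set \<Sigma> \<R> \<and> regular \<Sigma> R \<and>
               \<not> rational_set \<Sigma> (dunion \<R> R)"
    using rational_set_dunion_counterexample by blast
  show "\<exists>(\<Sigma>::nat set) (\<Delta>::nat set) \<phi> K R. alphabet \<Sigma> \<and> represents \<Sigma> \<Delta> K \<phi> (subst_word \<phi> ` K) \<and>
          finite (subst_word \<phi> ` K) \<and> regular \<Sigma> R \<and>
          \<not> (\<exists>K'. represents \<Sigma> \<Delta> K' \<phi> (dunion (subst_word \<phi> ` K) R))"
    using dunion_requires_new_subst \<open>alphabet {0::nat}\<close> \<open>regular {0::nat} {[]}\<close> by blast
next
  fix \<Sigma> :: "'a set" and \<R> R
  assume "alphabet \<Sigma> \<and> rational_set \<Sigma> \<R> \<and> finite \<R> \<and> regular \<Sigma> R"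
  then show "rational_set \<Sigma> (dunion \<R> R)"
    unfolding dunion_def
    by (auto intro!: rational_set_finite reg_union dest: rational_set_regular)
qed

end
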